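(* Let $k\ge2$, let $f:(k+1)^V\to\mathbb{R}_{\ge0}$ be non-negative, monotone and $k$-submodular with multilinear extension $F$, and let $OPT=\max_{S\in(k+1)^V}f(S)$. Run the meta-framework with $\delta=1/N$ where, at every iteration $t$ and for every $i\in[n]$, $v_{i,j_i(t)}(t)=1$ and $v_{i,j}(t)=0$ for $j\neq j_i(t)$, with $j_i(t)\in\arg\max_{j\in[k]}\frac{\partial F}{\partial x_{i,j}}(s(t))$ (ties broken arbitrarily). Then $s(N)\in\mathcal P$, in fact $\sum_{j}s_{i,j}(N)=1$ for every $i$, and for every $\varepsilon>0$ there is $N_0$ such that for all $N\ge N_0$, $F(s(N))\ge\frac12 OPT-\varepsilon$.
   Context: Let $V=[n]=\{1,\dots,n\}$ and let $k\ge 1$ be an integer. Write $(k+1)^V$ for the set of $k$-tuples $S=(S_1,\dots,S_k)$ of pairwise disjoint subsets of $V$. For $S,T\in(k+1)^V$ let $S\sqcap T=(S_1\cap T_1,\dots,S_k\cap T_k)$ and let $S\sqcup T$ be the tuple whose $j$-th component is $(S_j\cup T_j)\setminus\bigcup_{l\neq j}(S_l\cup T_l)$. A function $f:(k+1)^V\to\mathbb{R}$ is $k$-submodular if $f(S)+f(T)\ge f(S\sqcap T)+f(S\sqcup T)$ for all $S,T\in(k+1)^V$. Write $S\preceq T$ if $S_j\subseteq T_j$ for all $j$; $f$ is monotone if $S\preceq T$ implies $f(S)\le f(T)$. Let $\mathcal P=\{x\in[0,1]^{n\times k}:\sum_{j=1}^k x_{i,j}\le 1\ \forall i\in[n]\}$.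 The multilinear extension of $f$ is the polynomial $F(x)=\sum_{S\in(k+1)^V} f(S_1,\dots,S_k)\Big(\prod_{j\in[k]}\prod_{i\in S_j}x_{i,j}\Big)\prod_{i\in V\setminus\bigcup_j S_j}\Big(1-\sum_{j=1}^k x_{i,j}\Big)$, considered on $\mathcal P$. Meta-framework: fix a positive integer $N$ and $\delta=1/N$. Set $s(0)=0\in\mathbb{R}^{n\times k}$. For $t=0,1,\dots,N-1$, choose a direction $v(t)\in[0,1]^{n\times k}$ with $\sum_{j=1}^k v_{i,j}(t)=1$ for every $i\in[n]$, and set $s(t+1)=s(t)+\delta\,v(t)$. The output is $s(N)$. *)

theory Defs
  imports "HOL-Analysis.Analysis"
begin

text \<open>Ground set V = {1..n}; labels j range over {1..k}.
  A k-tuple S = (S_1,...,S_k) is a function nat => nat set, with S j = {} for j outside {1..k}.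
  A point x of R^{n x k} is a function nat => nat => real, entry x i j.\<close>

definition ksets :: "nat \<Rightarrow> nat \<Rightarrow> (nat \<Rightarrow> nat set) set" where
  "ksets n k = {S. (\<forall>j\<in>{1..k}. S j \<subseteq> {1..n}) \<and> (\<forall>j. j \<notin> {1..k} \<longrightarrow> S j = {})
      \<and> (\<forall>j\<in>{1..k}. \<forall>l\<in>{1..k}. j \<noteq> l \<longrightarrow> S j \<inter> S l = {})}"

definition kmeet :: "(nat \<Rightarrow> nat set) \<Rightarrow> (nat \<Rightarrow> nat set) \<Rightarrow> nat \<Rightarrow> nat set" where
  "kmeet S T = (\<lambda>j. S j \<inter> T j)"

definition kjoin :: "nat \<Rightarrow> (nat \<Rightarrow> nat set) \<Rightarrow> (nat \<Rightarrow> nat set) \<Rightarrow> nat \<Rightarrow> nat set" where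
  "kjoin k S T = (\<lambda>j. if j \<in> {1..k} then
      (S j \<union> T j) - (\<Union>l\<in>{1..k} - {j}. S l \<union> T l) else {})"

definition k_submodular :: "nat \<Rightarrow> nat \<Rightarrow> ((nat \<Rightarrow> nat set) \<Rightarrow> real) \<Rightarrow> bool" where
  "k_submodular n k f \<longleftrightarrow> (\<forall>S\<in>ksets n k. \<forall>T\<in>ksets n k.
      f S + f T \<ge> f (kmeet S T) + f (kjoin k S T))"

definition kpreceq :: "nat \<Rightarrow> (nat \<Rightarrow> nat set) \<Rightarrow> (nat \<Rightarrow> nat set) \<Rightarrow> bool" where
  "kpreceq k S T \<longleftrightarrow> (\<forall>j\<in>{1..k}. S j \<subseteq> T j)"

definition k_monotone :: "nat \<Rightarrow> nat \<Rightarrow> ((nat \<Rightarrow> nat set) \<Rightarrow> real) \<Rightarrow> bool" where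
  "k_monotone n k f \<longleftrightarrow> (\<forall>S\<in>ksets n k. \<forall>T\<in>ksets n k. kpreceq k S T \<longrightarrow> f S \<le> f T)"

definition polytopeP :: "nat \<Rightarrow> nat \<Rightarrow> (nat \<Rightarrow> nat \<Rightarrow> real) set" where
  "polytopeP n k = {x. (\<forall>i\<in>{1..n}. \<forall>j\<in>{1..k}. 0 \<le> x i j \<and> x i j \<le> 1)
      \<and> (\<forall>i\<in>{1..n}. (\<Sum>j=1..k. x i j) \<le> 1)}"

definition multilinear_ext :: "nat \<Rightarrow> nat \<Rightarrow> ((nat \<Rightarrow> nat set) \<Rightarrow> real) \<Rightarrow> (nat \<Rightarrow> nat \<Rightarrow> real) \<Rightarrow> real" where
  "multilinear_ext n k f x = (\<Sum>S\<in>ksets n k. f S *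
      (\<Prod>j\<in>{1..k}. \<Prod>i\<in>S j. x i j) *
      (\<Prod>i\<in>{1..n} - (\<Union>j\<in>{1..k}. S j). 1 - (\<Sum>j=1..k. x i j)))"

definition partial :: "((nat \<Rightarrow> nat \<Rightarrow> real) \<Rightarrow> real) \<Rightarrow> nat \<Rightarrow> nat \<Rightarrow> (nat \<Rightarrow> nat \<Rightarrow> real) \<Rightarrow> real" where
  "partial G i j x = deriv (\<lambda>t. G (x(i := (x i)(j := t)))) (x i j)"

definition greedy_run :: "nat \<Rightarrow> nat \<Rightarrow> ((nat \<Rightarrow> nat set) \<Rightarrow> real) \<Rightarrow> nat
    \<Rightarrow> (nat \<Rightarrow> nat \<Rightarrow> nat) \<Rightarrow> (nat \<Rightarrow> nat \<Rightarrow> nat \<Rightarrow> real) \<Rightarrow> bool" where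
  "greedy_run n k f N J s \<longleftrightarrow>
     s 0 = (\<lambda>i j. 0) \<and>
     (\<forall>t<N. s (Suc t) = (\<lambda>i j. s t i j + (1 / real N) * (if j = J t i then 1 else 0))) \<and>
     (\<forall>t<N. \<forall>i\<in>{1..n}. J t i \<in> {1..k} \<and>
        (\<forall>j\<in>{1..k}. partial (multilinear_ext n k f) i j (s t)
                      \<le> partial (multilinear_ext n k f) i (J t i) (s t)))"

end

theory Submission
  imports Defs
begin

text \<open>A point x of the polytope is read as a product distribution on assignments
  \<sigma> :: nat \<Rightarrow> nat, element l receiving label j \<in> {1..k} with probability x l j and
  label 0 ("unassigned") with the remaining probability; the multilinear extension is
  the expectation of f under this distribution. It is affine in every row, with partial
  derivative \<partial>F/\<partial>x i j (x) = E[f(\<sigma>(i:=j)) - f(\<sigma>(i:=0))], which is nonnegative by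
  monotonicity and antitone in x by k-submodularity. Let \<omega> be an optimal assignment
  and compare the greedy path s(t) with p(t) = s(t) + (1 - t/N) 1_\<omega>, which moves from
  1_\<omega> to s(N). Since s(t) \<le> p(t) and the greedy labels maximise the gradient at s(t), one
  step lowers F along p(t) by at most \<delta> \<Sigma>_i \<partial>F/\<partial>x i J (s(t)), while F along s(t) grows by at
  least \<delta> \<Sigma>_i \<partial>F/\<partial>x i J (s(t+1)). The two sums differ by a telescoping sum bounded by n k OPT,
  so OPT - F(s(N)) \<le> F(s(N)) + n k OPT / N.\<close>

section \<open>Expectations over random labellings\<close>

definition label_prob :: "nat \<Rightarrow> (nat \<Rightarrow> real) \<Rightarrow> nat \<Rightarrow> real" where
  "label_prob k r c = (if c = 0 then 1 - (\<Sum>j=1..k. r j) else r c)"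

text \<open>The expectation of g when \<sigma> l is drawn from label_prob k (x l) independently for
  l \<in> {1..m}, and \<sigma> l = 0 for all other l.\<close>

fun label_expectation ::
    "nat \<Rightarrow> nat \<Rightarrow> ((nat \<Rightarrow> nat) \<Rightarrow> real) \<Rightarrow> (nat \<Rightarrow> nat \<Rightarrow> real) \<Rightarrow> real" where
  "label_expectation k 0 g x = g (\<lambda>_. 0)"
| "label_expectation k (Suc m) g x =
     (\<Sum>c=0..k. label_prob k (x (Suc m)) c * label_expectation k m (\<lambda>\<sigma>. g (\<sigma>(Suc m := c))) x)"

lemma sum_label_prob: "(\<Sum>c=0..k. label_prob k r c) = 1"
proof -
  have "{0..k} = insert 0 {1..k}" by auto
  then have "(\<Sum>c=0..k. label_prob k r c) = label_prob k r 0 + (\<Sum>c=1..k. label_prob k r c)"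
    by simp
  also have "(\<Sum>c=1..k. label_prob k r c) = (\<Sum>c=1..k. r c)"
    by (rule sum.cong) (auto simp: label_prob_def)
  finally show ?thesis by (simp add: label_prob_def)
qed

lemma sum_label_prob_mult:
  "(\<Sum>c=0..k. label_prob k r c * A c) = A 0 + (\<Sum>j=1..k. r j * (A j - A 0))"
proof -
  have "{0..k} = insert 0 {1..k}" by auto
  then have "(\<Sum>c=0..k. label_prob k r c * A c)
      = label_prob k r 0 * A 0 + (\<Sum>c=1..k. label_prob k r c * A c)"
    by simp
  also have "(\<Sum>c=1..k. label_prob k r c * A c) = (\<Sum>c=1..k. r c * A c)"
    by (rule sum.cong) (auto simp: label_prob_def)
  also have "(\<Sum>c=1..k. r c * A c) = (\<Sum>j=1..k. r j * (A j - A 0)) + (\<Sum>j=1..k. r j) * A 0"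
    by (simp add: right_diff_distrib sum_subtractf sum_distrib_right)
  finally show ?thesis by (simp add: label_prob_def algebra_simps)
qed

lemma polytopeP_row_sum_iff:
  "x \<in> polytopeP m k \<longleftrightarrow> (\<forall>l\<in>{1..m}. (\<forall>j\<in>{1..k}. 0 \<le> x l j) \<and> (\<Sum>j=1..k. x l j) \<le> 1)"
proof
  assume x: "\<forall>l\<in>{1..m}. (\<forall>j\<in>{1..k}. 0 \<le> x l j) \<and> (\<Sum>j=1..k. x l j) \<le> 1"
  have "x l j \<le> 1" if "l \<in> {1..m}" "j \<in> {1..k}" for l j
    using member_le_sum[of j "{1..k}" "x l"] x that by force
  with x show "x \<in> polytopeP m k" by (simp add: polytopeP_def)
qed (simp add: polytopeP_def)

lemma polytopeP_iff_label_prob_nonneg: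
  "x \<in> polytopeP m k \<longleftrightarrow> (\<forall>l\<in>{1..m}. \<forall>c\<in>{0..k}. 0 \<le> label_prob k (x l) c)"
proof -
  have "(\<forall>c\<in>{0..k}. 0 \<le> label_prob k r c) \<longleftrightarrow> (\<forall>j\<in>{1..k}. 0 \<le> r j) \<and> (\<Sum>j=1..k. r j) \<le> 1" for r
    by (auto simp: label_prob_def)
  then show ?thesis by (simp add: polytopeP_row_sum_iff)
qed

lemma label_expectation_linear:
  "label_expectation k m (\<lambda>\<sigma>. a * g \<sigma> + b * h \<sigma>) x
     = a * label_expectation k m g x + b * label_expectation k m h x"
  by (induction m arbitrary: g h) (simp_all add: sum.distrib sum_distrib_left algebra_simps)

lemma label_expectation_diff:
  "label_expectation k m (\<lambda>\<sigma>. g \<sigma> - h \<sigma>) x = label_expectation k m g x - label_expectation k m h x"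
  using label_expectation_linear[of k m 1 g "-1" h x] by simp

lemma label_expectation_const: "label_expectation k m (\<lambda>_. a) x = a"
  by (induction m) (simp_all add: sum_distrib_right[symmetric] sum_label_prob)

lemma label_expectation_mono:
  assumes "x \<in> polytopeP m k" and "\<And>\<sigma>. g \<sigma> \<le> h \<sigma>"
  shows "label_expectation k m g x \<le> label_expectation k m h x"
  using assms
proof (induction m arbitrary: g h)
  case (Suc m)
  have x: "x \<in> polytopeP m k"
    using Suc.prems(1) by (simp add: polytopeP_iff_label_prob_nonneg)
  show ?case unfolding label_expectation.simps
  proof (rule sum_mono)
    fix c assume "c \<in> {0..k}"
    then have "0 \<le> label_prob k (x (Suc m)) c"
      using Suc.prems(1) by (simp add: polytopeP_iff_label_prob_nonneg)
    moreover have "label_expectation k m (\<lambda>\<sigma>. g (\<sigma>(Suc m := c))) x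
        \<le> label_expectation k m (\<lambda>\<sigma>. h (\<sigma>(Suc m := c))) x"
      by (rule Suc.IH[OF x Suc.prems(2)])
    ultimately show "label_prob k (x (Suc m)) c * label_expectation k m (\<lambda>\<sigma>. g (\<sigma>(Suc m := c))) x
        \<le> label_prob k (x (Suc m)) c * label_expectation k m (\<lambda>\<sigma>. h (\<sigma>(Suc m := c))) x"
      by (rule mult_left_mono[rotated])
  qed
qed simp

lemma label_expectation_cong:
  assumes "\<And>l j. l \<in> {1..m} \<Longrightarrow> j \<in> {1..k} \<Longrightarrow> x l j = y l j"
  shows "label_expectation k m g x = label_expectation k m g y"
  using assms
proof (induction m arbitrary: g)
  case (Suc m)
  have "label_prob k (x (Suc m)) c = label_prob k (y (Suc m)) c" if "c \<in> {0..k}" for c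
    using Suc.prems that by (auto simp: label_prob_def intro!: sum.cong)
  moreover have "label_expectation k m g' x = label_expectation k m g' y" for g'
    using Suc.IH Suc.prems by simp
  ultimately show ?case
    unfolding label_expectation.simps by (intro sum.cong refl arg_cong2[where f = "(*)"]) auto
qed simp

lemma label_expectation_update_irrelevant:
  assumes "i \<in> {1..m}" and "\<And>\<sigma> c. g (\<sigma>(i := c)) = g \<sigma>"
  shows "label_expectation k m g (x(i := r)) = label_expectation k m g x"
  using assms
proof (induction m arbitrary: g)
  case (Suc m)
  show ?case
  proof (cases "i = Suc m")
    case True
    have g_upd: "(\<lambda>\<sigma>. g (\<sigma>(Suc m := c))) = g" for c
      using Suc.prems(2) True by (simp only:)
    have unchanged: "label_expectation k m g' (x(Suc m := r)) = label_expectation k m g' x" for g'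
      by (rule label_expectation_cong) auto
    have "label_expectation k (Suc m) g (x(i := r))
        = (\<Sum>c=0..k. label_prob k r c * label_expectation k m g x)"
      using True by (simp only: label_expectation.simps g_upd unchanged fun_upd_same)
    also have "\<dots> = label_expectation k (Suc m) g x"
      by (simp only: label_expectation.simps g_upd sum_distrib_right[symmetric] sum_label_prob)
    finally show ?thesis .
  next
    case False
    then have i: "i \<in> {1..m}" using Suc.prems(1) by auto
    have "label_expectation k m (\<lambda>\<sigma>. g (\<sigma>(Suc m := c))) (x(i := r))
        = label_expectation k m (\<lambda>\<sigma>. g (\<sigma>(Suc m := c))) x" for c
    proof (rule Suc.IH[OF i])
      fix \<sigma> c'
      have "\<sigma>(i := c', Suc m := c) = \<sigma>(Suc m := c, i := c')"
        using False by (rule fun_upd_twist)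
      then show "g (\<sigma>(i := c', Suc m := c)) = g (\<sigma>(Suc m := c))"
        using Suc.prems(2) by metis
    qed
    moreover have "(x(i := r)) (Suc m) = x (Suc m)" using False by simp
    ultimately show ?thesis by (simp only: label_expectation.simps)
  qed
qed simp

lemma label_expectation_expand_row:
  assumes "i \<in> {1..m}"
  shows "label_expectation k m g x
    = (\<Sum>c=0..k. label_prob k (x i) c * label_expectation k m (\<lambda>\<sigma>. g (\<sigma>(i := c))) x)"
  using assms
proof (induction m arbitrary: g)
  case (Suc m)
  show ?case
  proof (cases "i = Suc m")
    case True
    have "label_expectation k (Suc m) (\<lambda>\<sigma>. g (\<sigma>(Suc m := c))) x
        = label_expectation k m (\<lambda>\<sigma>. g (\<sigma>(Suc m := c))) x" for c
    proof -
      have "label_expectation k (Suc m) (\<lambda>\<sigma>. g (\<sigma>(Suc m := c))) x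
          = (\<Sum>c'=0..k. label_prob k (x (Suc m)) c' *
               label_expectation k m (\<lambda>\<sigma>. g (\<sigma>(Suc m := c))) x)"
        by (simp only: label_expectation.simps fun_upd_upd)
      then show ?thesis by (simp add: sum_distrib_right[symmetric] sum_label_prob)
    qed
    then show ?thesis unfolding True by (simp only: label_expectation.simps)
  next
    case False
    then have i: "i \<in> {1..m}" using Suc.prems(1) by auto
    have "label_expectation k (Suc m) g x = (\<Sum>c=0..k. label_prob k (x (Suc m)) c *
        (\<Sum>c'=0..k. label_prob k (x i) c' *
           label_expectation k m (\<lambda>\<sigma>. g (\<sigma>(i := c', Suc m := c))) x))"
    proof -
      have "label_expectation k m (\<lambda>\<sigma>. g (\<sigma>(Suc m := c))) x = (\<Sum>c'=0..k. label_prob k (x i) c' *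
          label_expectation k m (\<lambda>\<sigma>. g (\<sigma>(i := c', Suc m := c))) x)" for c
        by (rule Suc.IH[OF i])
      then show ?thesis by (simp only: label_expectation.simps)
    qed
    also have "\<dots> = (\<Sum>c'=0..k. label_prob k (x i) c' * (\<Sum>c=0..k. label_prob k (x (Suc m)) c *
        label_expectation k m (\<lambda>\<sigma>. g (\<sigma>(i := c', Suc m := c))) x))"
      unfolding sum_distrib_left by (rule trans[OF sum.swap]) (simp add: mult.left_commute)
    also have "\<dots> = (\<Sum>c'=0..k. label_prob k (x i) c' *
        label_expectation k (Suc m) (\<lambda>\<sigma>. g (\<sigma>(i := c'))) x)"
      by (simp only: label_expectation.simps fun_upd_twist[OF False])
    finally show ?thesis .
  qed
qed simp

lemma label_expectation_update_row:
  assumes i: "i \<in> {1..m}"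
  shows "label_expectation k m g (x(i := r)) = label_expectation k m (\<lambda>\<sigma>. g (\<sigma>(i := 0))) x
      + (\<Sum>j=1..k. r j * label_expectation k m (\<lambda>\<sigma>. g (\<sigma>(i := j)) - g (\<sigma>(i := 0))) x)"
proof -
  have "label_expectation k m g (x(i := r))
      = (\<Sum>c=0..k. label_prob k r c * label_expectation k m (\<lambda>\<sigma>. g (\<sigma>(i := c))) (x(i := r)))"
    using label_expectation_expand_row[OF i, of k g "x(i := r)"] by simp
  also have "\<dots> = (\<Sum>c=0..k. label_prob k r c * label_expectation k m (\<lambda>\<sigma>. g (\<sigma>(i := c))) x)"
    by (rule sum.cong[OF refl]) (subst label_expectation_update_irrelevant[OF i], auto)
  finally show ?thesis by (simp add: sum_label_prob_mult label_expectation_diff)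
qed

lemma label_expectation_update_row_diff:
  assumes "i \<in> {1..m}"
  shows "label_expectation k m g (x(i := r)) - label_expectation k m g (x(i := r'))
    = (\<Sum>j=1..k. (r j - r' j) *
         label_expectation k m (\<lambda>\<sigma>. g (\<sigma>(i := j)) - g (\<sigma>(i := 0))) x)"
  unfolding label_expectation_update_row[OF assms] by (simp add: sum_subtractf left_diff_distrib)

definition label_decreasing :: "nat \<Rightarrow> nat \<Rightarrow> ((nat \<Rightarrow> nat) \<Rightarrow> real) \<Rightarrow> bool" where
  "label_decreasing n k G \<longleftrightarrow>
     (\<forall>\<sigma> l c. l \<in> {1..n} \<longrightarrow> c \<in> {1..k} \<longrightarrow> G (\<sigma>(l := c)) \<le> G (\<sigma>(l := 0)))"

lemma label_expectation_increase_entry: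
  assumes G: "label_decreasing n k G" and x: "x \<in> polytopeP n k"
    and l: "l \<in> {1..n}" and c: "c \<in> {1..k}" and d: "0 \<le> d"
  shows "label_expectation k n G (x(l := (x l)(c := x l c + d))) \<le> label_expectation k n G x"
proof -
  let ?D = "\<lambda>j. label_expectation k n (\<lambda>\<sigma>. G (\<sigma>(l := j)) - G (\<sigma>(l := 0))) x"
  have "label_expectation k n G (x(l := (x l)(c := x l c + d))) - label_expectation k n G (x(l := x l))
      = (\<Sum>j=1..k. (((x l)(c := x l c + d)) j - x l j) * ?D j)"
    by (rule label_expectation_update_row_diff[OF l])
  also have "\<dots> = (\<Sum>j=1..k. if j = c then d * ?D j else 0)"
    by (rule sum.cong) auto
  also have "\<dots> = d * ?D c"
    using c by (simp add: sum.delta)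
  also have "\<dots> \<le> 0"
  proof -
    have "?D c \<le> label_expectation k n (\<lambda>_. 0) x"
      by (rule label_expectation_mono[OF x]) (use G l c in \<open>auto simp: label_decreasing_def\<close>)
    then show ?thesis using d by (simp add: label_expectation_const mult_nonneg_nonpos)
  qed
  finally show ?thesis by simp
qed

lemma label_expectation_antimono:
  assumes G: "label_decreasing n k G" and x: "x \<in> polytopeP n k" and y: "y \<in> polytopeP n k"
    and le: "\<And>l c. l \<in> {1..n} \<Longrightarrow> c \<in> {1..k} \<Longrightarrow> x l c \<le> y l c"
  shows "label_expectation k n G y \<le> label_expectation k n G x"
proof -
  define z where "z A = (\<lambda>l c. if (l, c) \<in> A then y l c else x l c)" for A
  have z: "z A \<in> polytopeP n k" for A
    unfolding polytopeP_row_sum_iff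
  proof
    fix l assume l: "l \<in> {1..n}"
    have between: "x l c \<le> z A l c" "z A l c \<le> y l c" if "c \<in> {1..k}" for c
      using le l that by (auto simp: z_def)
    have "0 \<le> x l c" if "c \<in> {1..k}" for c
      using x l that by (auto simp: polytopeP_row_sum_iff)
    then have "\<forall>c\<in>{1..k}. 0 \<le> z A l c"
      using between(1) order_trans by blast
    moreover have "(\<Sum>j=1..k. z A l j) \<le> (\<Sum>j=1..k. y l j)"
      using between(2) by (rule sum_mono)
    moreover have "(\<Sum>j=1..k. y l j) \<le> 1"
      using y l by (simp add: polytopeP_row_sum_iff)
    ultimately show "(\<forall>c\<in>{1..k}. 0 \<le> z A l c) \<and> (\<Sum>j=1..k. z A l j) \<le> 1"
      by auto
  qed
  have main: "A \<subseteq> {1..n} \<times> {1..k} \<Longrightarrow> label_expectation k n G (z A) \<le> label_expectation k n G x"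
    if "finite A" for A
    using that
  proof (induction A rule: finite_induct)
    case empty
    have "z {} = x" by (simp add: z_def)
    then show ?case by simp
  next
    case (insert a A)
    obtain l c where a: "a = (l, c)" by (cases a)
    have lc: "l \<in> {1..n}" "c \<in> {1..k}" using insert.prems a by auto
    have zA: "z A l c = x l c" using insert.hyps(2) a by (simp add: z_def)
    have eq: "z (insert a A) = (z A)(l := (z A l)(c := z A l c + (y l c - x l c)))"
      using a zA by (auto simp: z_def fun_eq_iff)
    have dn: "y l c - x l c \<ge> 0" using le[OF lc] by simp
    have "label_expectation k n G (z (insert a A)) \<le> label_expectation k n G (z A)"
      unfolding eq by (rule label_expectation_increase_entry[OF G z lc dn])
    also have "\<dots> \<le> label_expectation k n G x" using insert.IH insert.prems by simp
    finally show ?case .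
  qed
  have "label_expectation k n G y = label_expectation k n G (z ({1..n} \<times> {1..k}))"
    by (rule label_expectation_cong) (simp add: z_def)
  also have "\<dots> \<le> label_expectation k n G x" by (rule main) auto
  finally show ?thesis .
qed

section \<open>Assignments and the multilinear extension\<close>

definition tuple_of :: "nat \<Rightarrow> nat \<Rightarrow> (nat \<Rightarrow> nat) \<Rightarrow> nat \<Rightarrow> nat set" where
  "tuple_of n k \<sigma> = (\<lambda>j. if j \<in> {1..k} then {l \<in> {1..n}. \<sigma> l = j} else {})"

definition assignments :: "nat \<Rightarrow> nat \<Rightarrow> (nat \<Rightarrow> nat) set" where
  "assignments m k = {\<sigma>. (\<forall>l\<in>{1..m}. \<sigma> l \<in> {0..k}) \<and> (\<forall>l. l \<notin> {1..m} \<longrightarrow> \<sigma> l = 0)}"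

lemma tuple_of_in_ksets: "tuple_of n k \<sigma> \<in> ksets n k"
  by (auto simp: tuple_of_def ksets_def)

lemma assignments_0: "assignments 0 k = {\<lambda>_. 0}"
  by (auto simp: assignments_def)

lemma assignments_Suc:
  "assignments (Suc m) k = (\<lambda>(c, \<sigma>). \<sigma>(Suc m := c)) ` ({0..k} \<times> assignments m k)"
proof
  show "assignments (Suc m) k \<subseteq> (\<lambda>(c, \<sigma>). \<sigma>(Suc m := c)) ` ({0..k} \<times> assignments m k)"
  proof
    fix \<tau> assume t: "\<tau> \<in> assignments (Suc m) k"
    have "\<tau> = (\<lambda>(c, \<sigma>). \<sigma>(Suc m := c)) (\<tau> (Suc m), \<tau>(Suc m := 0))" by simp
    moreover have "(\<tau> (Suc m), \<tau>(Suc m := 0)) \<in> {0..k} \<times> assignments m k"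
      using t by (auto simp: assignments_def)
    ultimately show "\<tau> \<in> (\<lambda>(c, \<sigma>). \<sigma>(Suc m := c)) ` ({0..k} \<times> assignments m k)" by blast
  qed
qed (auto simp: assignments_def)

lemma inj_on_assignment_update:
  "inj_on (\<lambda>(c, \<sigma>). \<sigma>(Suc m := c)) ({0..k} \<times> assignments m k)"
proof (rule inj_onI, clarify)
  fix c1 \<sigma>1 c2 \<sigma>2
  assume \<sigma>: "\<sigma>1 \<in> assignments m k" "\<sigma>2 \<in> assignments m k"
    and eq: "\<sigma>1(Suc m := c1) = \<sigma>2(Suc m := c2)"
  have "c1 = c2" using fun_cong[OF eq, of "Suc m"] by simp
  moreover have "\<sigma>1 l = \<sigma>2 l" for l
    using \<sigma> fun_cong[OF eq, of l] by (cases "l = Suc m") (auto simp: assignments_def)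
  ultimately show "c1 = c2 \<and> \<sigma>1 = \<sigma>2" by auto
qed

lemma finite_assignments: "finite (assignments m k)"
  by (induction m) (simp_all add: assignments_0 assignments_Suc)

lemma label_expectation_eq_sum:
  "label_expectation k m g x = (\<Sum>\<sigma>\<in>assignments m k. g \<sigma> * (\<Prod>l\<in>{1..m}. label_prob k (x l) (\<sigma> l)))"
proof (induction m arbitrary: g)
  case (Suc m)
  let ?w = "\<lambda>m \<sigma>. \<Prod>l\<in>{1..m}. label_prob k (x l) (\<sigma> l)"
  have w_update: "?w (Suc m) (\<sigma>(Suc m := c)) = label_prob k (x (Suc m)) c * ?w m \<sigma>" for \<sigma> c
  proof -
    have "{1..Suc m} = insert (Suc m) {1..m}" by auto
    moreover have "?w m (\<sigma>(Suc m := c)) = ?w m \<sigma>"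
      by (rule prod.cong) auto
    ultimately show ?thesis by simp
  qed
  have "(\<Sum>\<tau>\<in>assignments (Suc m) k. g \<tau> * ?w (Suc m) \<tau>)
      = (\<Sum>(c, \<sigma>)\<in>{0..k} \<times> assignments m k. g (\<sigma>(Suc m := c)) * ?w (Suc m) (\<sigma>(Suc m := c)))"
    unfolding assignments_Suc
    by (subst sum.reindex[OF inj_on_assignment_update]) (simp add: split_def)
  also have "\<dots> = (\<Sum>c=0..k. label_prob k (x (Suc m)) c *
      (\<Sum>\<sigma>\<in>assignments m k. g (\<sigma>(Suc m := c)) * ?w m \<sigma>))"
    by (simp add: sum.cartesian_product[symmetric] w_update sum_distrib_left ac_simps)
  also have "\<dots> = label_expectation k (Suc m) g x"
    by (simp only: label_expectation.simps Suc.IH)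
  finally show ?case by simp
qed (simp add: assignments_0)

lemma inj_on_tuple_of: "inj_on (tuple_of n k) (assignments n k)"
proof (rule inj_onI, rule ext)
  fix \<sigma> \<tau> l
  assume \<sigma>: "\<sigma> \<in> assignments n k" and \<tau>: "\<tau> \<in> assignments n k"
    and eq: "tuple_of n k \<sigma> = tuple_of n k \<tau>"
  have labelled: "\<sigma> l = j \<longleftrightarrow> \<tau> l = j" if "l \<in> {1..n}" "j \<in> {1..k}" for j
    using fun_cong[OF eq, of j] that by (auto simp: tuple_of_def)
  show "\<sigma> l = \<tau> l"
  proof (cases "l \<in> {1..n}")
    case True
    then have "\<sigma> l \<le> k" "\<tau> l \<le> k" using \<sigma> \<tau> by (auto simp: assignments_def)
    then show ?thesis
      using labelled[OF True, of "\<sigma> l"] labelled[OF True, of "\<tau> l"]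
      by (cases "\<sigma> l = 0"; cases "\<tau> l = 0") auto
  qed (use \<sigma> \<tau> in \<open>auto simp: assignments_def\<close>)
qed

lemma ksets_subset_tuple_of_image: "ksets n k \<subseteq> tuple_of n k ` assignments n k"
proof
  fix S assume S: "S \<in> ksets n k"
  have unique: "j' = j" if "j \<in> {1..k}" "j' \<in> {1..k}" "l \<in> S j" "l \<in> S j'" for l j j'
    using S that unfolding ksets_def by blast
  define \<sigma> where "\<sigma> l = (if \<exists>j\<in>{1..k}. l \<in> S j then THE j. j \<in> {1..k} \<and> l \<in> S j else 0)" for l
  have \<sigma>_eq: "\<sigma> l = j" if "j \<in> {1..k}" "l \<in> S j" for l j
    unfolding \<sigma>_def using that unique by (auto intro!: the_equality)
  have "\<sigma> \<in> assignments n k"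
  proof -
    have "\<sigma> l \<le> k" for l
    proof (cases "\<exists>j\<in>{1..k}. l \<in> S j")
      case True
      then obtain j where "j \<in> {1..k}" "l \<in> S j" by blast
      then show ?thesis using \<sigma>_eq by simp
    qed (simp add: \<sigma>_def)
    moreover have "\<sigma> l = 0" if "l \<notin> {1..n}" for l
    proof -
      have "\<not> (\<exists>j\<in>{1..k}. l \<in> S j)" using S that unfolding ksets_def by blast
      then show ?thesis by (simp add: \<sigma>_def)
    qed
    ultimately show ?thesis by (auto simp: assignments_def)
  qed
  moreover have "S = tuple_of n k \<sigma>"
  proof
    fix j
    have "S j = {l \<in> {1..n}. \<sigma> l = j}" if j: "j \<in> {1..k}"
    proof (intro set_eqI iffI)
      fix l assume "l \<in> {l \<in> {1..n}. \<sigma> l = j}"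
      then have "\<exists>j'\<in>{1..k}. l \<in> S j'" using j by (auto simp: \<sigma>_def split: if_splits)
      then show "l \<in> S j" using \<open>l \<in> {l \<in> {1..n}. \<sigma> l = j}\<close> \<sigma>_eq by fastforce
    next
      fix l assume "l \<in> S j"
      then show "l \<in> {l \<in> {1..n}. \<sigma> l = j}" using S j \<sigma>_eq unfolding ksets_def by blast
    qed
    then show "S j = tuple_of n k \<sigma> j"
      using S by (auto simp: tuple_of_def ksets_def)
  qed
  ultimately show "S \<in> tuple_of n k ` assignments n k" by blast
qed

lemma bij_betw_tuple_of: "bij_betw (tuple_of n k) (assignments n k) (ksets n k)"
  unfolding bij_betw_def using inj_on_tuple_of ksets_subset_tuple_of_image tuple_of_in_ksets by blast

lemma finite_ksets: "finite (ksets n k)"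
  using bij_betw_finite[OF bij_betw_tuple_of] finite_assignments by blast

lemma multilinear_weight_eq_prod_label_prob:
  assumes s: "\<sigma> \<in> assignments n k"
  shows "(\<Prod>j\<in>{1..k}. \<Prod>i\<in>tuple_of n k \<sigma> j. x i j) *
         (\<Prod>i\<in>{1..n} - (\<Union>j\<in>{1..k}. tuple_of n k \<sigma> j). 1 - (\<Sum>j=1..k. x i j))
       = (\<Prod>l\<in>{1..n}. label_prob k (x l) (\<sigma> l))"
proof -
  define U where "U = {l\<in>{1..n}. \<sigma> l \<noteq> 0}"
  have sk: "\<sigma> l \<le> k" if "l \<in> {1..n}" for l using s that by (auto simp: assignments_def)
  have h1: "(\<Union>j\<in>{1..k}. tuple_of n k \<sigma> j) = U"
    using sk by (auto simp: tuple_of_def U_def)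
  have h2: "(\<Prod>j\<in>{1..k}. \<Prod>i\<in>tuple_of n k \<sigma> j. x i j) = (\<Prod>i\<in>U. x i (\<sigma> i))"
  proof -
    have "(\<Prod>j\<in>{1..k}. \<Prod>i\<in>tuple_of n k \<sigma> j. x i j)
        = (\<Prod>j\<in>{1..k}. \<Prod>i\<in>{l\<in>U. \<sigma> l = j}. x i (\<sigma> i))"
    proof (rule prod.cong[OF refl])
      fix j assume j: "j \<in> {1..k}"
      have "tuple_of n k \<sigma> j = {l\<in>U. \<sigma> l = j}" using j by (auto simp: tuple_of_def U_def)
      show "(\<Prod>i\<in>tuple_of n k \<sigma> j. x i j) = (\<Prod>i\<in>{l\<in>U. \<sigma> l = j}. x i (\<sigma> i))"
        unfolding \<open>tuple_of n k \<sigma> j = {l\<in>U. \<sigma> l = j}\<close> by (rule prod.cong[OF refl]) simp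
    qed
    also have "\<dots> = (\<Prod>i\<in>U. x i (\<sigma> i))"
      by (rule prod.group) (use sk in \<open>auto simp: U_def\<close>)
    finally show ?thesis .
  qed
  have h3: "(\<Prod>i\<in>{1..n} - U. 1 - (\<Sum>j=1..k. x i j))
      = (\<Prod>l\<in>{1..n} - U. label_prob k (x l) (\<sigma> l))"
    by (rule prod.cong) (auto simp: U_def label_prob_def)
  have h4: "(\<Prod>i\<in>U. x i (\<sigma> i)) = (\<Prod>l\<in>U. label_prob k (x l) (\<sigma> l))"
    by (rule prod.cong) (auto simp: U_def label_prob_def)
  have "(\<Prod>l\<in>{1..n}. label_prob k (x l) (\<sigma> l))
      = (\<Prod>l\<in>{1..n} - U. label_prob k (x l) (\<sigma> l)) * (\<Prod>l\<in>U. label_prob k (x l) (\<sigma> l))"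
    by (rule prod.subset_diff) (auto simp: U_def)
  then show ?thesis unfolding h1 h2 h3 h4 by (simp add: mult.commute)
qed

lemma multilinear_ext_eq_label_expectation:
  "multilinear_ext n k f x = label_expectation k n (\<lambda>\<sigma>. f (tuple_of n k \<sigma>)) x"
proof -
  have "multilinear_ext n k f x = (\<Sum>\<sigma>\<in>assignments n k. f (tuple_of n k \<sigma>) *
      (\<Prod>j\<in>{1..k}. \<Prod>i\<in>tuple_of n k \<sigma> j. x i j) *
      (\<Prod>i\<in>{1..n} - (\<Union>j\<in>{1..k}. tuple_of n k \<sigma> j). 1 - (\<Sum>j=1..k. x i j)))"
    unfolding multilinear_ext_def by (rule sum.reindex_bij_betw[OF bij_betw_tuple_of, symmetric])
  also have "\<dots> = (\<Sum>\<sigma>\<in>assignments n k. f (tuple_of n k \<sigma>) * (\<Prod>l\<in>{1..n}. label_prob k (x l) (\<sigma> l)))"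
    by (intro sum.cong refl) (simp only: mult.assoc multilinear_weight_eq_prod_label_prob)
  finally show ?thesis by (simp add: label_expectation_eq_sum)
qed

definition indicator_point :: "(nat \<Rightarrow> nat) \<Rightarrow> nat \<Rightarrow> nat \<Rightarrow> real" where
  "indicator_point \<sigma> = (\<lambda>i j. if j = \<sigma> i \<and> j \<noteq> 0 then 1 else 0)"

lemma label_prob_indicator_point:
  "\<sigma> l \<le> k \<Longrightarrow> c \<le> k \<Longrightarrow> label_prob k (indicator_point \<sigma> l) c = (if c = \<sigma> l then 1 else 0)"
  by (cases "\<sigma> l = 0") (auto simp: label_prob_def indicator_point_def sum.delta)

lemma label_expectation_indicator_point:
  "(\<And>l. l \<in> {1..m} \<Longrightarrow> \<sigma> l \<le> k) \<Longrightarrow>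
   label_expectation k m g (indicator_point \<sigma>) = g (\<lambda>l. if l \<in> {1..m} then \<sigma> l else 0)"
proof (induction m arbitrary: g)
  case (Suc m)
  let ?E = "\<lambda>c. label_expectation k m (\<lambda>\<tau>. g (\<tau>(Suc m := c))) (indicator_point \<sigma>)"
  have "label_expectation k (Suc m) g (indicator_point \<sigma>)
      = (\<Sum>c=0..k. if c = \<sigma> (Suc m) then ?E c else 0)"
    unfolding label_expectation.simps using Suc.prems
    by (intro sum.cong) (simp_all add: label_prob_indicator_point)
  also have "\<dots> = ?E (\<sigma> (Suc m))"
    using Suc.prems by (simp add: sum.delta)
  also have "\<dots> = g ((\<lambda>l. if l \<in> {1..m} then \<sigma> l else 0)(Suc m := \<sigma> (Suc m)))"
    by (rule Suc.IH) (use Suc.prems in auto)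
  also have "(\<lambda>l. if l \<in> {1..m} then \<sigma> l else 0)(Suc m := \<sigma> (Suc m))
      = (\<lambda>l. if l \<in> {1..Suc m} then \<sigma> l else 0)"
    by (auto simp: fun_eq_iff)
  finally show ?case .
qed simp

lemma indicator_point_nonneg: "0 \<le> indicator_point \<sigma> l j"
  by (simp add: indicator_point_def)

lemma sum_indicator_point_mult:
  "(\<Sum>j=1..k. indicator_point \<sigma> l j * D j) = (if \<sigma> l \<in> {1..k} then D (\<sigma> l) else 0)"
proof -
  have "(\<Sum>j=1..k. indicator_point \<sigma> l j * D j) = (\<Sum>j=1..k. if \<sigma> l = j then D j else 0)"
    by (rule sum.cong) (auto simp: indicator_point_def)
  then show ?thesis by (simp add: sum.delta)
qed

lemma sum_indicator_point_le_1: "(\<Sum>j=1..k. indicator_point \<sigma> l j) \<le> 1"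
  using sum_indicator_point_mult[where D = "\<lambda>_. 1"] by simp

lemma kpreceq_tuple_of_update:
  "i \<in> {1..n} \<Longrightarrow> j \<in> {1..k} \<Longrightarrow> kpreceq k (tuple_of n k (\<sigma>(i := 0))) (tuple_of n k (\<sigma>(i := j)))"
  by (auto simp: kpreceq_def tuple_of_def)

lemma kmeet_tuple_of_updates:
  assumes "\<tau> i = 0" "\<tau> l = 0" "i \<noteq> l" "j \<in> {1..k}" "c \<in> {1..k}"
  shows "kmeet (tuple_of n k (\<tau>(i := j))) (tuple_of n k (\<tau>(l := c))) = tuple_of n k \<tau>"
  using assms by (auto simp: kmeet_def tuple_of_def fun_eq_iff)

lemma kjoin_tuple_of_updates:
  assumes "\<tau> i = 0" "\<tau> l = 0" "i \<noteq> l" "j \<in> {1..k}" "c \<in> {1..k}"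
  shows "kjoin k (tuple_of n k (\<tau>(i := j))) (tuple_of n k (\<tau>(l := c)))
    = tuple_of n k (\<tau>(i := j, l := c))"
proof
  fix j'
  show "kjoin k (tuple_of n k (\<tau>(i := j))) (tuple_of n k (\<tau>(l := c))) j'
    = tuple_of n k (\<tau>(i := j, l := c)) j'"
  proof (cases "j' \<in> {1..k}")
    case True
    then show ?thesis using assms by (auto simp: kjoin_def tuple_of_def)
  next
    case False
    then show ?thesis unfolding kjoin_def tuple_of_def by (simp only: if_not_P[OF False] if_False)
  qed
qed

section \<open>The gradient of the multilinear extension\<close>

locale nonneg_monotone_k_submodular =
  fixes n k :: nat and f :: "(nat \<Rightarrow> nat set) \<Rightarrow> real"
  assumes nonneg: "\<forall>S\<in>ksets n k. 0 \<le> f S"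
    and monotone: "k_monotone n k f"
    and submodular: "k_submodular n k f"
begin

abbreviation F :: "(nat \<Rightarrow> nat \<Rightarrow> real) \<Rightarrow> real" where
  "F \<equiv> multilinear_ext n k f"

definition OPT :: real where
  "OPT = Max (f ` ksets n k)"

definition f_asg :: "(nat \<Rightarrow> nat) \<Rightarrow> real" where
  "f_asg \<sigma> = f (tuple_of n k \<sigma>)"

definition marginal :: "nat \<Rightarrow> nat \<Rightarrow> (nat \<Rightarrow> nat) \<Rightarrow> real" where
  "marginal i j \<sigma> = f_asg (\<sigma>(i := j)) - f_asg (\<sigma>(i := 0))"

definition grad :: "nat \<Rightarrow> nat \<Rightarrow> (nat \<Rightarrow> nat \<Rightarrow> real) \<Rightarrow> real" where
  "grad i j x = label_expectation k n (marginal i j) x"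

lemma F_eq_label_expectation: "F x = label_expectation k n f_asg x"
  unfolding f_asg_def by (rule multilinear_ext_eq_label_expectation)

lemma f_asg_nonneg: "0 \<le> f_asg \<sigma>"
  using nonneg tuple_of_in_ksets by (simp add: f_asg_def)

lemma f_asg_le_OPT: "f_asg \<sigma> \<le> OPT"
  unfolding f_asg_def OPT_def by (rule Max_ge) (use finite_ksets tuple_of_in_ksets in auto)

lemma exists_optimal_assignment: "\<exists>\<sigma>\<in>assignments n k. f_asg \<sigma> = OPT"
proof -
  have "ksets n k \<noteq> {}" using tuple_of_in_ksets by blast
  then have "OPT \<in> f ` ksets n k"
    unfolding OPT_def by (rule Max_in[OF finite_imageI[OF finite_ksets], simplified])
  then obtain S where "S \<in> ksets n k" "f S = OPT" by (metis imageE)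
  moreover from this obtain \<sigma> where "\<sigma> \<in> assignments n k" "S = tuple_of n k \<sigma>"
    using ksets_subset_tuple_of_image by blast
  ultimately show ?thesis by (auto simp: f_asg_def)
qed

lemma F_indicator_point:
  assumes "\<sigma> \<in> assignments n k"
  shows "F (indicator_point \<sigma>) = f_asg \<sigma>"
proof -
  have "(\<lambda>l. if l \<in> {1..n} then \<sigma> l else 0) = \<sigma>"
    using assms by (auto simp: assignments_def)
  then show ?thesis
    using assms label_expectation_indicator_point[of n \<sigma> k f_asg]
    by (simp add: F_eq_label_expectation assignments_def)
qed

lemma marginal_nonneg:
  assumes "i \<in> {1..n}" "j \<in> {1..k}"
  shows "0 \<le> marginal i j \<sigma>"
  using monotone kpreceq_tuple_of_update[OF assms, of \<sigma>] tuple_of_in_ksets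
  unfolding marginal_def f_asg_def k_monotone_def by auto

text \<open>This is the only place where k-submodularity is used: labelling another element l
  can only decrease the marginal gain of labelling i.\<close>

lemma label_decreasing_marginal:
  assumes i: "i \<in> {1..n}" and j: "j \<in> {1..k}"
  shows "label_decreasing n k (marginal i j)"
  unfolding label_decreasing_def
proof (intro allI impI)
  fix \<sigma> l c assume l: "l \<in> {1..n}" and c: "c \<in> {1..k}"
  show "marginal i j (\<sigma>(l := c)) \<le> marginal i j (\<sigma>(l := 0))"
  proof (cases "l = i")
    case False
    define \<tau> where "\<tau> = \<sigma>(l := 0, i := 0)"
    have \<tau>: "\<tau> i = 0" "\<tau> l = 0" using False by (auto simp: \<tau>_def)
    have "f (tuple_of n k (\<tau>(i := j))) + f (tuple_of n k (\<tau>(l := c)))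
        \<ge> f (kmeet (tuple_of n k (\<tau>(i := j))) (tuple_of n k (\<tau>(l := c))))
          + f (kjoin k (tuple_of n k (\<tau>(i := j))) (tuple_of n k (\<tau>(l := c))))"
      using submodular tuple_of_in_ksets unfolding k_submodular_def by blast
    then have "f_asg (\<tau>(i := j)) + f_asg (\<tau>(l := c)) \<ge> f_asg \<tau> + f_asg (\<tau>(i := j, l := c))"
      unfolding f_asg_def using \<tau> False j c
      by (simp add: kmeet_tuple_of_updates kjoin_tuple_of_updates)
    moreover have "(\<sigma>(l := c))(i := j) = \<tau>(i := j, l := c)" "(\<sigma>(l := c))(i := 0) = \<tau>(l := c)"
      "(\<sigma>(l := 0))(i := j) = \<tau>(i := j)" "(\<sigma>(l := 0))(i := 0) = \<tau>"
      using False by (auto simp: \<tau>_def fun_eq_iff)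
    ultimately show ?thesis by (simp add: marginal_def)
  qed (simp add: marginal_def)
qed

lemma grad_nonneg:
  assumes "i \<in> {1..n}" "j \<in> {1..k}" "x \<in> polytopeP n k"
  shows "0 \<le> grad i j x"
  using label_expectation_mono[OF assms(3), of "\<lambda>_. 0" "marginal i j"]
    marginal_nonneg[OF assms(1,2)]
  by (simp add: grad_def label_expectation_const)

lemma grad_le_OPT:
  assumes "x \<in> polytopeP n k"
  shows "grad i j x \<le> OPT"
proof -
  have "marginal i j \<sigma> \<le> OPT" for \<sigma>
    using f_asg_le_OPT[of "\<sigma>(i := j)"] f_asg_nonneg[of "\<sigma>(i := 0)"] by (simp add: marginal_def)
  then show ?thesis
    using label_expectation_mono[OF assms, of "marginal i j" "\<lambda>_. OPT"]
    by (simp add: grad_def label_expectation_const)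
qed

lemma grad_antimono:
  assumes "i \<in> {1..n}" "j \<in> {1..k}" "x \<in> polytopeP n k" "y \<in> polytopeP n k"
    and "\<And>l c. l \<in> {1..n} \<Longrightarrow> c \<in> {1..k} \<Longrightarrow> x l c \<le> y l c"
  shows "grad i j y \<le> grad i j x"
  unfolding grad_def
  by (rule label_expectation_antimono[OF label_decreasing_marginal[OF assms(1,2)] assms(3-5)])

lemma F_update_row_diff:
  assumes "i \<in> {1..n}"
  shows "F (x(i := r)) - F (x(i := r')) = (\<Sum>j=1..k. (r j - r' j) * grad i j x)"
  unfolding F_eq_label_expectation grad_def marginal_def
  by (rule label_expectation_update_row_diff[OF assms])

lemma partial_F_eq_grad:
  assumes i: "i \<in> {1..n}" and j: "j \<in> {1..k}"
  shows "partial F i j x = grad i j x"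
proof -
  define C where "C = F (x(i := (\<lambda>_. 0))) + (\<Sum>j'\<in>{1..k} - {j}. x i j' * grad i j' x)"
  have "F (x(i := (x i)(j := t))) = C + t * grad i j x" for t
  proof -
    have "F (x(i := (x i)(j := t))) - F (x(i := (\<lambda>_. 0)))
        = (\<Sum>j'=1..k. ((x i)(j := t)) j' * grad i j' x)"
      using F_update_row_diff[OF i, of x "(x i)(j := t)" "\<lambda>_. 0"] by simp
    also have "\<dots> = t * grad i j x + (\<Sum>j'\<in>{1..k} - {j}. x i j' * grad i j' x)"
      using j by (subst sum.remove[of _ j]) (auto intro!: sum.cong)
    finally show ?thesis unfolding C_def by simp
  qed
  moreover have "((\<lambda>t. C + t * grad i j x) has_real_derivative grad i j x) (at (x i j))"
    by (auto intro!: derivative_eq_intros)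
  ultimately show ?thesis
    unfolding partial_def by (simp add: DERIV_imp_deriv)
qed

text \<open>Replace the rows of a by those of b one at a time; by multilinearity every step
  changes F by a first-order term.\<close>

lemma F_diff_eq_sum_rows:
  "F b - F a = (\<Sum>i<n. \<Sum>j=1..k.
     (b (Suc i) j - a (Suc i) j) * grad (Suc i) j (\<lambda>l. if l \<le> i then b l else a l))"
proof -
  define H where "H m = (\<lambda>l. if l \<le> m then b l else a l)" for m
  have step: "F (H (Suc i)) - F (H i)
      = (\<Sum>j=1..k. (b (Suc i) j - a (Suc i) j) * grad (Suc i) j (H i))"
    if "i < n" for i
  proof -
    have "H (Suc i) = (H i)(Suc i := b (Suc i))" "H i = (H i)(Suc i := a (Suc i))"
      by (auto simp: H_def fun_eq_iff)
    then show ?thesis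
      using F_update_row_diff[of "Suc i" "H i" "b (Suc i)" "a (Suc i)"] that by simp
  qed
  have "F (H n) = F b" "F (H 0) = F a"
    unfolding F_eq_label_expectation by (auto intro: label_expectation_cong simp: H_def)
  then have "F b - F a = (\<Sum>i<n. F (H (Suc i)) - F (H i))"
    using sum_lessThan_telescope[of "\<lambda>m. F (H m)" n] by simp
  also have "\<dots> = (\<Sum>i<n. \<Sum>j=1..k. (b (Suc i) j - a (Suc i) j) * grad (Suc i) j (H i))"
    using step by simp
  finally show ?thesis unfolding H_def .
qed

end

section \<open>The greedy run\<close>

locale greedy_run_setting = nonneg_monotone_k_submodular +
  fixes N :: nat and J :: "nat \<Rightarrow> nat \<Rightarrow> nat" and s :: "nat \<Rightarrow> nat \<Rightarrow> nat \<Rightarrow> real"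
  assumes N_pos: "0 < N" and run: "greedy_run n k f N J s"
begin

lemma s_0: "s 0 = (\<lambda>i j. 0)"
  using run by (simp add: greedy_run_def)

lemma s_Suc: "t < N \<Longrightarrow> s (Suc t) i j = s t i j + 1 / real N * (if j = J t i then 1 else 0)"
  using run by (simp add: greedy_run_def)

lemma J_label: "t < N \<Longrightarrow> i \<in> {1..n} \<Longrightarrow> J t i \<in> {1..k}"
  using run by (simp add: greedy_run_def)

lemma grad_le_grad_J:
  assumes "t < N" "i \<in> {1..n}" "j \<in> {1..k}"
  shows "grad i j (s t) \<le> grad i (J t i) (s t)"
proof -
  have "partial F i j (s t) \<le> partial F i (J t i) (s t)"
    using run assms by (simp add: greedy_run_def)
  then show ?thesis
    using partial_F_eq_grad[OF assms(2,3)] partial_F_eq_grad[OF assms(2) J_label[OF assms(1,2)]] by simp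
qed

lemma s_mono: "t < N \<Longrightarrow> s t i j \<le> s (Suc t) i j"
  by (simp add: s_Suc)

lemma s_nonneg_row_sum:
  assumes "t \<le> N" "i \<in> {1..n}"
  shows "(\<forall>j\<in>{1..k}. 0 \<le> s t i j) \<and> (\<Sum>j=1..k. s t i j) = real t / real N"
  using assms(1)
proof (induction t)
  case 0 then show ?case by (simp add: s_0)
next
  case (Suc t)
  then have t: "t < N" by simp
  have "(\<Sum>j=1..k. if j = J t i then 1 else 0 :: real) = 1"
    using J_label[OF t assms(2)] by (simp add: sum.delta)
  then have "(\<Sum>j=1..k. 1 / real N * (if j = J t i then 1 else 0)) = 1 / real N"
    by (simp only: sum_distrib_left[symmetric])
  then have "(\<Sum>j=1..k. s (Suc t) i j) = (\<Sum>j=1..k. s t i j) + 1 / real N"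
    by (simp add: s_Suc[OF t] sum.distrib)
  then show ?case
    using Suc.IH t by (simp add: s_Suc[OF t] add_divide_distrib)
qed

lemma s_in_polytopeP:
  assumes "t \<le> N"
  shows "s t \<in> polytopeP n k"
proof -
  have "real t / real N \<le> 1" using assms N_pos by simp
  then show ?thesis
    using s_nonneg_row_sum[OF assms] by (simp add: polytopeP_row_sum_iff)
qed

definition opt_path :: "(nat \<Rightarrow> nat) \<Rightarrow> nat \<Rightarrow> nat \<Rightarrow> nat \<Rightarrow> real" where
  "opt_path \<omega> t = (\<lambda>i j. s t i j + (1 - real t / real N) * indicator_point \<omega> i j)"

lemma opt_path_0: "opt_path \<omega> 0 = indicator_point \<omega>"
  by (simp add: opt_path_def s_0)

lemma opt_path_N: "opt_path \<omega> N = s N"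
  using N_pos by (simp add: opt_path_def)

lemma s_le_opt_path: "t \<le> N \<Longrightarrow> s t i j \<le> opt_path \<omega> t i j"
  using N_pos indicator_point_nonneg[of \<omega> i j] by (simp add: opt_path_def)

lemma opt_path_in_polytopeP:
  assumes t: "t \<le> N"
  shows "opt_path \<omega> t \<in> polytopeP n k"
  unfolding polytopeP_row_sum_iff
proof
  fix i assume i: "i \<in> {1..n}"
  have c: "0 \<le> 1 - real t / real N" using t N_pos by simp
  have "(\<Sum>j=1..k. opt_path \<omega> t i j)
      = (\<Sum>j=1..k. s t i j) + (1 - real t / real N) * (\<Sum>j=1..k. indicator_point \<omega> i j)"
    by (simp add: opt_path_def sum.distrib sum_distrib_left)
  also have "\<dots> \<le> real t / real N + (1 - real t / real N) * 1"
    using s_nonneg_row_sum[OF t i] mult_left_mono[OF sum_indicator_point_le_1[of \<omega> i k] c] by simp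
  finally have "(\<Sum>j=1..k. opt_path \<omega> t i j) \<le> 1" by simp
  moreover have "0 \<le> opt_path \<omega> t i j" if "j \<in> {1..k}" for j
    using s_le_opt_path[OF t, of i j \<omega>] s_nonneg_row_sum[OF t i] that by fastforce
  ultimately show "(\<forall>j\<in>{1..k}. 0 \<le> opt_path \<omega> t i j) \<and> (\<Sum>j=1..k. opt_path \<omega> t i j) \<le> 1"
    by blast
qed

lemma opt_path_step:
  assumes t: "t < N"
  shows "opt_path \<omega> t i j - opt_path \<omega> (Suc t) i j
    = 1 / real N * indicator_point \<omega> i j - 1 / real N * (if j = J t i then 1 else 0)"
proof -
  have "real (Suc t) / real N = real t / real N + 1 / real N" by (simp add: add_divide_distrib)
  then show ?thesis unfolding opt_path_def s_Suc[OF t] by (simp add: algebra_simps)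
qed

lemma F_step_ge:
  assumes t: "t < N"
  shows "1 / real N * (\<Sum>i<n. grad (Suc i) (J t (Suc i)) (s (Suc t))) \<le> F (s (Suc t)) - F (s t)"
proof -
  define H where "H i = (\<lambda>l. if l \<le> i then s (Suc t) l else s t l)" for i
  have "1 / real N * grad (Suc i) (J t (Suc i)) (s (Suc t))
      \<le> (\<Sum>j=1..k. (s (Suc t) (Suc i) j - s t (Suc i) j) * grad (Suc i) j (H i))" if i: "i < n" for i
  proof -
    have Ji: "J t (Suc i) \<in> {1..k}" using J_label[OF t] i by simp
    have "H i \<in> polytopeP n k"
      using s_in_polytopeP t by (simp add: H_def polytopeP_row_sum_iff)
    then have "grad (Suc i) (J t (Suc i)) (s (Suc t)) \<le> grad (Suc i) (J t (Suc i)) (H i)"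
      using i Ji t s_in_polytopeP s_mono by (intro grad_antimono) (auto simp: H_def)
    moreover have "(\<Sum>j=1..k. (s (Suc t) (Suc i) j - s t (Suc i) j) * grad (Suc i) j (H i))
        = (\<Sum>j=1..k. if j = J t (Suc i) then 1 / real N * grad (Suc i) j (H i) else 0)"
      by (rule sum.cong) (auto simp: s_Suc[OF t])
    moreover have "\<dots> = 1 / real N * grad (Suc i) (J t (Suc i)) (H i)"
      using Ji by (simp add: sum.delta)
    ultimately show ?thesis by (simp add: divide_right_mono)
  qed
  then have "1 / real N * (\<Sum>i<n. grad (Suc i) (J t (Suc i)) (s (Suc t)))
      \<le> (\<Sum>i<n. \<Sum>j=1..k. (s (Suc t) (Suc i) j - s t (Suc i) j) * grad (Suc i) j (H i))"
    unfolding sum_distrib_left by (intro sum_mono) simp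
  also have "\<dots> = F (s (Suc t)) - F (s t)"
    unfolding H_def by (rule F_diff_eq_sum_rows[symmetric])
  finally show ?thesis .
qed

lemma F_opt_path_step_le:
  assumes t: "t < N"
  shows "F (opt_path \<omega> t) - F (opt_path \<omega> (Suc t))
    \<le> 1 / real N * (\<Sum>i<n. grad (Suc i) (J t (Suc i)) (s t))"
proof -
  define H where "H i = (\<lambda>l. if l \<le> i then opt_path \<omega> t l else opt_path \<omega> (Suc t) l)" for i
  have "(\<Sum>j=1..k. (opt_path \<omega> t (Suc i) j - opt_path \<omega> (Suc t) (Suc i) j) * grad (Suc i) j (H i))
      \<le> 1 / real N * grad (Suc i) (J t (Suc i)) (s t)" if i: "i < n" for i
  proof -
    have si: "Suc i \<in> {1..n}" using i by simp
    have Ji: "J t (Suc i) \<in> {1..k}" using J_label[OF t si] .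
    have H: "H i \<in> polytopeP n k"
      using opt_path_in_polytopeP t by (simp add: H_def polytopeP_row_sum_iff)
    have s_le_H: "s t l c \<le> H i l c" for l c
      using s_le_opt_path[of t l c \<omega>] s_le_opt_path[of "Suc t" l c \<omega>] s_mono[OF t, of l c] t
      by (simp add: H_def)
    let ?D = "\<lambda>j. grad (Suc i) j (H i)"
    have "(\<Sum>j=1..k. (opt_path \<omega> t (Suc i) j - opt_path \<omega> (Suc t) (Suc i) j) * ?D j)
        = (\<Sum>j=1..k. 1 / real N * (indicator_point \<omega> (Suc i) j * ?D j)
            - 1 / real N * (if j = J t (Suc i) then ?D j else 0))"
      by (rule sum.cong) (auto simp: opt_path_step[OF t] algebra_simps)
    also have "\<dots> = 1 / real N * (\<Sum>j=1..k. indicator_point \<omega> (Suc i) j * ?D j)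
        - 1 / real N * ?D (J t (Suc i))"
      using Ji by (simp only: sum_subtractf sum_distrib_left[symmetric] sum.delta) simp
    also have "\<dots> \<le> 1 / real N * (\<Sum>j=1..k. indicator_point \<omega> (Suc i) j * ?D j)"
      using grad_nonneg[OF si Ji H] by simp
    also have "\<dots> \<le> 1 / real N * grad (Suc i) (J t (Suc i)) (s t)"
    proof (rule mult_left_mono[OF _ divide_nonneg_nonneg])
      show "(\<Sum>j=1..k. indicator_point \<omega> (Suc i) j * ?D j) \<le> grad (Suc i) (J t (Suc i)) (s t)"
      proof (cases "\<omega> (Suc i) \<in> {1..k}")
        case True
        have "?D (\<omega> (Suc i)) \<le> grad (Suc i) (\<omega> (Suc i)) (s t)"
          using t s_le_H by (intro grad_antimono[OF si True s_in_polytopeP H]) auto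
        also have "\<dots> \<le> grad (Suc i) (J t (Suc i)) (s t)"
          by (rule grad_le_grad_J[OF t si True])
        finally show ?thesis unfolding sum_indicator_point_mult using True by simp
      next
        case False
        then show ?thesis
          unfolding sum_indicator_point_mult if_not_P[OF False]
          using grad_nonneg[OF si Ji s_in_polytopeP[of t]] t by simp
      qed
    qed simp_all
    finally show ?thesis .
  qed
  then have "(\<Sum>i<n. \<Sum>j=1..k. (opt_path \<omega> t (Suc i) j - opt_path \<omega> (Suc t) (Suc i) j) * grad (Suc i) j (H i))
      \<le> 1 / real N * (\<Sum>i<n. grad (Suc i) (J t (Suc i)) (s t))"
    unfolding sum_distrib_left by (intro sum_mono) simp
  then show ?thesis
    unfolding H_def F_diff_eq_sum_rows[of "opt_path \<omega> t" "opt_path \<omega> (Suc t)"] .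
qed

text \<open>The greedy sums along s(t) and s(t+1) differ by a sum telescoping in t, and each
  gradient lies in [0, OPT].\<close>

lemma greedy_sums_diff_le:
  "(\<Sum>t<N. \<Sum>i<n. grad (Suc i) (J t (Suc i)) (s t))
     - (\<Sum>t<N. \<Sum>i<n. grad (Suc i) (J t (Suc i)) (s (Suc t))) \<le> real n * real k * OPT"
proof -
  define \<Delta> where "\<Delta> t i j = grad (Suc i) j (s t) - grad (Suc i) j (s (Suc t))" for t i j
  have \<Delta>_nonneg: "0 \<le> \<Delta> t i j" if "t < N" "i < n" "j \<in> {1..k}" for t i j
    using grad_antimono[of "Suc i" j "s t" "s (Suc t)"] that s_in_polytopeP s_mono
    by (simp add: \<Delta>_def)
  have "(\<Sum>t<N. \<Sum>i<n. grad (Suc i) (J t (Suc i)) (s t))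
      - (\<Sum>t<N. \<Sum>i<n. grad (Suc i) (J t (Suc i)) (s (Suc t)))
      = (\<Sum>t<N. \<Sum>i<n. \<Delta> t i (J t (Suc i)))"
    by (simp add: \<Delta>_def sum_subtractf)
  also have "\<dots> \<le> (\<Sum>t<N. \<Sum>i<n. \<Sum>j=1..k. \<Delta> t i j)"
  proof (intro sum_mono)
    fix t i assume "t \<in> {..<N}" "i \<in> {..<n}"
    then show "\<Delta> t i (J t (Suc i)) \<le> (\<Sum>j=1..k. \<Delta> t i j)"
      using J_label[of t "Suc i"] \<Delta>_nonneg by (intro member_le_sum) auto
  qed
  also have "\<dots> = (\<Sum>i<n. \<Sum>j=1..k. \<Sum>t<N. \<Delta> t i j)"
    by (simp only: sum.swap[of _ "{..<N}"] sum.swap[of _ "{..<N}" "{1..k}"])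
  also have "\<dots> = (\<Sum>i<n. \<Sum>j=1..k. grad (Suc i) j (s 0) - grad (Suc i) j (s N))"
    unfolding \<Delta>_def by (intro sum.cong refl) (rule sum_lessThan_telescope')
  also have "\<dots> \<le> (\<Sum>i<n. \<Sum>j=1..k. OPT)"
  proof (intro sum_mono)
    fix i j assume "i \<in> {..<n}" "j \<in> {1..k}"
    then have "0 \<le> grad (Suc i) j (s N)"
      using s_in_polytopeP by (intro grad_nonneg) auto
    moreover have "grad (Suc i) j (s 0) \<le> OPT"
      using s_in_polytopeP by (intro grad_le_OPT) simp
    ultimately show "grad (Suc i) j (s 0) - grad (Suc i) j (s N) \<le> OPT" by simp
  qed
  finally show ?thesis by simp
qed

theorem F_greedy_ge: "OPT / 2 - real n * real k * OPT / (2 * real N) \<le> F (s N)"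
proof -
  obtain \<omega> where \<omega>: "\<omega> \<in> assignments n k" "f_asg \<omega> = OPT"
    using exists_optimal_assignment by blast
  define A where "A = (\<Sum>t<N. \<Sum>i<n. grad (Suc i) (J t (Suc i)) (s (Suc t)))"
  define B where "B = (\<Sum>t<N. \<Sum>i<n. grad (Suc i) (J t (Suc i)) (s t))"
  have "1 / real N * A = (\<Sum>t<N. 1 / real N * (\<Sum>i<n. grad (Suc i) (J t (Suc i)) (s (Suc t))))"
    unfolding A_def by (simp add: sum_distrib_left)
  also have "\<dots> \<le> (\<Sum>t<N. F (s (Suc t)) - F (s t))"
    by (intro sum_mono F_step_ge) simp
  also have "\<dots> = F (s N) - F (s 0)"
    by (rule sum_lessThan_telescope)
  finally have gain: "1 / real N * A \<le> F (s N) - F (s 0)" .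
  have "F (opt_path \<omega> 0) - F (opt_path \<omega> N) = (\<Sum>t<N. F (opt_path \<omega> t) - F (opt_path \<omega> (Suc t)))"
    by (rule sum_lessThan_telescope'[symmetric])
  also have "\<dots> \<le> (\<Sum>t<N. 1 / real N * (\<Sum>i<n. grad (Suc i) (J t (Suc i)) (s t)))"
    by (intro sum_mono F_opt_path_step_le) simp
  also have "\<dots> = 1 / real N * B"
    unfolding B_def by (simp add: sum_distrib_left)
  finally have loss: "F (opt_path \<omega> 0) - F (opt_path \<omega> N) \<le> 1 / real N * B" .
  have "1 / real N * (B - A) \<le> 1 / real N * (real n * real k * OPT)"
    unfolding A_def B_def by (rule mult_left_mono[OF greedy_sums_diff_le]) simp
  moreover have "(\<lambda>_. 0) \<in> assignments n k" "s 0 = indicator_point (\<lambda>_. 0)"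
    by (auto simp: assignments_def s_0 indicator_point_def fun_eq_iff)
  then have "0 \<le> F (s 0)"
    using F_indicator_point f_asg_nonneg by simp
  moreover have "F (opt_path \<omega> 0) = OPT" "F (opt_path \<omega> N) = F (s N)"
    using F_indicator_point[OF \<omega>(1)] \<omega>(2) by (simp_all add: opt_path_0 opt_path_N)
  ultimately have "OPT \<le> 2 * F (s N) + 1 / real N * (real n * real k * OPT)"
    using gain loss unfolding right_diff_distrib by linarith
  then show ?thesis by (simp add: field_simps)
qed

lemma s_N_rows_sum_1: "s N \<in> polytopeP n k \<and> (\<forall>i\<in>{1..n}. (\<Sum>j=1..k. s N i j) = 1)"
  using s_in_polytopeP[of N] s_nonneg_row_sum[of N] N_pos by simp

end

theorem mainTheorem6:
  fixes n k :: nat and f :: "(nat \<Rightarrow> nat set) \<Rightarrow> real"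
  assumes "k \<ge> 2"
    and "\<forall>S\<in>ksets n k. f S \<ge> 0"
    and "k_monotone n k f"
    and "k_submodular n k f"
  shows "(\<forall>N J s. N > 0 \<longrightarrow> greedy_run n k f N J s \<longrightarrow>
            s N \<in> polytopeP n k \<and> (\<forall>i\<in>{1..n}. (\<Sum>j=1..k. s N i j) = 1))
       \<and> (\<forall>\<epsilon>>0. \<exists>N0. \<forall>N\<ge>N0. \<forall>J s. N > 0 \<longrightarrow> greedy_run n k f N J s \<longrightarrow>
            multilinear_ext n k f (s N) \<ge> Max (f ` ksets n k) / 2 - \<epsilon>)"
proof -
  interpret nonneg_monotone_k_submodular n k f
    using assms(2-4) by unfold_locales
  have run: "greedy_run_setting n k f N J s" if "N > 0" "greedy_run n k f N J s" for N J s
    using that by unfold_locales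
  show ?thesis
  proof (intro conjI allI impI)
    fix N J s assume "N > 0" "greedy_run n k f N J s"
    then show "s N \<in> polytopeP n k" "\<forall>i\<in>{1..n}. (\<Sum>j=1..k. s N i j) = 1"
      using greedy_run_setting.s_N_rows_sum_1[OF run] by blast+
  next
    fix \<epsilon> :: real assume "\<epsilon> > 0"
    define C where "C = real n * real k * OPT"
    show "\<exists>N0. \<forall>N\<ge>N0. \<forall>J s. N > 0 \<longrightarrow> greedy_run n k f N J s \<longrightarrow>
            multilinear_ext n k f (s N) \<ge> Max (f ` ksets n k) / 2 - \<epsilon>"
    proof (intro exI allI impI)
      fix N J s assume N: "nat \<lceil>C / (2 * \<epsilon>)\<rceil> + 1 \<le> N" and "N > 0" "greedy_run n k f N J s"
      then have "C / (2 * \<epsilon>) \<le> real N"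
        by (meson add_leE of_nat_le_iff order_trans real_nat_ceiling_ge)
      then have "C / (2 * real N) \<le> \<epsilon>"
        using \<open>\<epsilon> > 0\<close> \<open>N > 0\<close> by (simp add: field_simps)
      then show "multilinear_ext n k f (s N) \<ge> Max (f ` ksets n k) / 2 - \<epsilon>"
        using greedy_run_setting.F_greedy_ge[OF run[OF \<open>N > 0\<close> \<open>greedy_run n k f N J s\<close>]]
        by (simp add: C_def OPT_def)
    qed
  qed
qed

end
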